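(* Let $M>0$, $0\le a<M$, $r_+=M+\sqrt{M^2-a^2}$ and $\Delta(r)=r^2-2Mr+a^2$. For $\mathcal{Q}\ge 0$ and $r>r_+$ define $$V_{\pm}(r,\mathcal Q)=\frac{2Mar\pm\sqrt{r\Delta(r)\big((1+\mathcal Q)r^3+a^2\mathcal Q(r+2M)\big)}}{r\,[\,r(r^2+a^2)+2Ma^2\,]}.$$ Then for every fixed $\mathcal Q\ge 0$, each of the functions $r\mapsto V_+(r,\mathcal Q)$ and $r\mapsto V_-(r,\mathcal Q)$ has exactly one local extremum in the interval $(r_+,\infty)$.
   Context: These are the "pseudo potentials" for null geodesics in the exterior of a sub-extremal Kerr spacetime in Boyer–Lindquist coordinates. For a null geodesic with $L_z\neq0$, set $\mathcal E=E/L_z$ and $\mathcal Q=Q/L_z^2$, where $E$ is the energy, $L_z$ the axial angular momentum and $Q=K-(aE-L_z)^2$ with $K$ Carter's constant. The radial function $R(r)=((r^2+a^2)E-aL_z)^2-\Delta(r)K$ satisfies $R=L_z^2\, r[r(r^2+a^2)+2Ma^2](\mathcal E-V_+(r,\mathcal Q))(\mathcal E-V_-(r,\mathcal Q))$, so $V_\pm(r,\mathcal Q)$ are the two values of $\mathcal E$ for which $r$ is a radial turning point. *)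

theory Defs
  imports Complex_Main
begin

definition kerr_Delta :: "real \<Rightarrow> real \<Rightarrow> real \<Rightarrow> real" where
  "kerr_Delta M a r = r^2 - 2*M*r + a^2"

definition r_plus :: "real \<Rightarrow> real \<Rightarrow> real" where
  "r_plus M a = M + sqrt (M^2 - a^2)"

definition V_plus :: "real \<Rightarrow> real \<Rightarrow> real \<Rightarrow> real \<Rightarrow> real" where
  "V_plus M a r Q =
     (2*M*a*r + sqrt (r * kerr_Delta M a r * ((1 + Q) * r^3 + a^2 * Q * (r + 2*M))))
     / (r * (r * (r^2 + a^2) + 2*M*a^2))"

definition V_minus :: "real \<Rightarrow> real \<Rightarrow> real \<Rightarrow> real \<Rightarrow> real" where
  "V_minus M a r Q =
     (2*M*a*r - sqrt (r * kerr_Delta M a r * ((1 + Q) * r^3 + a^2 * Q * (r + 2*M))))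
     / (r * (r * (r^2 + a^2) + 2*M*a^2))"

definition local_extremum_on :: "real set \<Rightarrow> (real \<Rightarrow> real) \<Rightarrow> real \<Rightarrow> bool" where
  "local_extremum_on S f x \<longleftrightarrow> x \<in> S \<and>
     ((\<exists>e>0. \<forall>y\<in>S. \<bar>y - x\<bar> < e \<longrightarrow> f y \<le> f x) \<or>
      (\<exists>e>0. \<forall>y\<in>S. \<bar>y - x\<bar> < e \<longrightarrow> f x \<le> f y))"

end

theory Submission
  imports Defs "HOL-Real_Asymp.Real_Asymp"
begin

text \<open>For fixed $\mathcal Q$, a radius $r > r_+$ is a turning point for the level $\mathcal E$ exactly
  when it is a root of the quartic $R/L_z^2$ in $r$. This quartic has no cubic term, so its roots sum
  to zero; since it is $\ge 0$ at the horizon and $\le 0$ at $r = 0$, one root lies in $[0, r_+]$,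
  hence at most two lie beyond $r_+$. Thus every horizontal line meets the two graphs of $V_\pm$
  on $(r_+, \infty)$ at most twice. Both graphs start at $\Omega_H$ on the horizon and decay to $0$,
  $V_+$ rises above $\Omega_H$ and $V_-$ drops below $0$. A dip or a plateau in either graph would
  produce a level met three times, so $V_+$ strictly increases up to its maximum and then strictly
  decreases, and $V_-$ behaves the other way round.\<close>

lemma IVT_strict:
  fixes k :: "real \<Rightarrow> real"
  assumes "continuous_on {p..} k" "p \<le> u" "u < v"
    and "(k u < c \<and> c < k v) \<or> (k v < c \<and> c < k u)"
  shows "\<exists>x. u < x \<and> x < v \<and> k x = c"
proof -
  have cont: "continuous_on {u..v} k"
    using assms(1,2) continuous_on_subset by fastforce
  from assms(4) show ?thesis
  proof
    assume "k u < c \<and> c < k v"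
    with IVT'[of k u c v] cont assms(3) show ?thesis by (force simp: order.order_iff_strict)
  next
    assume "k v < c \<and> c < k u"
    with IVT2'[of k v c u] cont assms(3) show ?thesis by (force simp: order.order_iff_strict)
  qed
qed

lemma level_attained_beyond:
  fixes k :: "real \<Rightarrow> real"
  assumes "continuous_on {p..} k" "(k \<longlongrightarrow> 0) at_top" "p \<le> y" "0 < c" "c < k y"
  shows "\<exists>z>y. k z = c"
proof -
  obtain X where X: "\<And>x. x \<ge> X \<Longrightarrow> k x < c"
    using order_tendstoD(2)[OF assms(2,4)] by (auto simp: eventually_at_top_linorder)
  have "k (max X (y + 1)) < c" by (rule X) simp
  then show ?thesis
    using IVT_strict[OF assms(1,3), of "max X (y + 1)" c] assms(5) by force
qed

lemma continuous_on_halfline_attains_max: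
  fixes k :: "real \<Rightarrow> real"
  assumes "continuous_on {p..} k" "(k \<longlongrightarrow> 0) at_top"
    and "p < x\<^sub>1" "k p < k x\<^sub>1" "0 < k x\<^sub>1"
  shows "\<exists>m>p. \<forall>x>p. k x \<le> k m"
proof -
  obtain X where X: "\<And>x. x \<ge> X \<Longrightarrow> k x < k x\<^sub>1"
    using order_tendstoD(2)[OF assms(2,5)] by (auto simp: eventually_at_top_linorder)
  define Y where "Y = max X x\<^sub>1"
  have "continuous_on {p..Y} k" using assms(1) continuous_on_subset by fastforce
  then obtain m where m: "m \<in> {p..Y}" "\<And>y. y \<in> {p..Y} \<Longrightarrow> k y \<le> k m"
    using continuous_attains_sup[of "{p..Y}" k] assms(3) Y_def by fastforce
  have "k x\<^sub>1 \<le> k m" using m(2) assms(3) Y_def by auto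
  then have "m > p" using m(1) assms(4) by (cases "m = p") auto
  moreover have "k x \<le> k m" if "x > p" for x
    using m(2)[of x] X[of x] \<open>k x\<^sub>1 \<le> k m\<close> that Y_def by (cases "x \<le> Y") force+
  ultimately show ?thesis by blast
qed

lemma unique_local_extremum_if_unimodal:
  fixes k :: "real \<Rightarrow> real"
  assumes "p < m" and inc: "strict_mono_on {p<..m} k" and dec: "strict_antimono_on {m..} k"
  shows "\<exists>!x. local_extremum_on {p<..} k x"
proof
  have "k x \<le> k m" if "x > p" for x
    using that strict_mono_onD[OF inc, of x m] monotone_onD[OF dec, of m x]
    by (cases x m rule: linorder_cases) auto
  then show "local_extremum_on {p<..} k m"
    unfolding local_extremum_on_def using assms(1) by (auto intro!: exI[of _ 1])
next
  fix x assume "local_extremum_on {p<..} k x"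
  then have "x > p" and
    "\<exists>e>0. (\<forall>y>p. \<bar>y - x\<bar> < e \<longrightarrow> k y \<le> k x) \<or> (\<forall>y>p. \<bar>y - x\<bar> < e \<longrightarrow> k x \<le> k y)"
    unfolding local_extremum_on_def by auto
  then obtain e where e: "e > 0"
    and ext: "(\<forall>y>p. \<bar>y - x\<bar> < e \<longrightarrow> k y \<le> k x) \<or> (\<forall>y>p. \<bar>y - x\<bar> < e \<longrightarrow> k x \<le> k y)"
    by blast
  show "x = m"
  proof (rule ccontr)
    assume "x \<noteq> m"
    then consider (left) "x < m" | (right) "m < x" by linarith
    then show False
    proof cases
      case left
      define d where "d = min (e/2) (min ((m - x)/2) ((x - p)/2))"
      have "d > 0" "d < e" "x + d \<le> m" "p < x - d"
        using e left \<open>x > p\<close> unfolding d_def by (auto simp: min_def field_simps)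
      then have "k (x - d) < k x" "k x < k (x + d)"
        using strict_mono_onD[OF inc] \<open>x > p\<close> left by auto
      moreover have "\<bar>(x + d) - x\<bar> < e" "\<bar>(x - d) - x\<bar> < e" "p < x + d"
        using \<open>d > 0\<close> \<open>d < e\<close> \<open>x > p\<close> by auto
      ultimately show False using ext \<open>p < x - d\<close> by (meson not_le)
    next
      case right
      define d where "d = min (e/2) (x - m)"
      have "d > 0" "d < e" "m \<le> x - d"
        using e right unfolding d_def by auto
      then have "k x < k (x - d)" "k (x + d) < k x"
        using monotone_onD[OF dec] right by auto
      moreover have "\<bar>(x + d) - x\<bar> < e" "\<bar>(x - d) - x\<bar> < e" "p < x - d" "p < x + d"
        using \<open>d > 0\<close> \<open>d < e\<close> \<open>m \<le> x - d\<close> \<open>p < m\<close> by auto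
      ultimately show False using ext by (meson not_le)
    qed
  qed
qed

lemma local_extremum_on_uminus:
  "local_extremum_on S (\<lambda>x. - k x) x \<longleftrightarrow> local_extremum_on S k x"
  unfolding local_extremum_on_def by auto

lemma exists_nonzero_between:
  fixes a b :: real
  assumes "a < b"
  shows "\<exists>c. a < c \<and> c < b \<and> c \<noteq> 0"
proof (cases "a + b = 0")
  case True
  with assms show ?thesis by (intro exI[of _ "b/2"]) auto
next
  case False
  with assms show ?thesis by (intro exI[of _ "(a + b)/2"]) auto
qed

text \<open>\<open>hit c x\<close> says that the level \<open>c\<close> is attained at \<open>x\<close> by \<open>k\<close> or by a companion function;
  \<open>third_hit\<close> provides, for a level crossed by \<open>k\<close>, one more hit that lies either beyond both
  crossings or off the graph of \<open>k\<close>.\<close>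
locale level_bounded =
  fixes p :: real and k :: "real \<Rightarrow> real" and hit :: "real \<Rightarrow> real \<Rightarrow> bool"
  assumes continuous: "continuous_on {p..} k"
    and hit_self: "\<And>x. p < x \<Longrightarrow> hit (k x) x"
    and at_most_two_hits: "\<And>c x y z. p < x \<Longrightarrow> p < y \<Longrightarrow> p < z \<Longrightarrow> x \<noteq> y \<Longrightarrow> x \<noteq> z \<Longrightarrow> y \<noteq> z
      \<Longrightarrow> hit c x \<Longrightarrow> hit c y \<Longrightarrow> hit c z \<Longrightarrow> False"
    and third_hit: "\<And>c x y. p < x \<Longrightarrow> x < y \<Longrightarrow> k x < c \<Longrightarrow> c < k y \<Longrightarrow> c \<noteq> 0
      \<Longrightarrow> \<exists>z>p. hit c z \<and> (y < z \<or> k z \<noteq> c)"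
begin

lemma no_valley:
  assumes "p < s" "s < t" "t < y"
  shows "min (k s) (k y) \<le> k t"
proof (rule ccontr)
  assume "\<not> ?thesis"
  then have "k t < min (k s) (k y)" by (simp only: not_le)
  then obtain c where "k t < c" "c < min (k s) (k y)" "c \<noteq> 0"
    using exists_nonzero_between by blast
  then have c: "k t < c" "c < k s" "c < k y" "c \<noteq> 0" by auto
  obtain x\<^sub>1 where x\<^sub>1: "s < x\<^sub>1" "x\<^sub>1 < t" "k x\<^sub>1 = c"
    using IVT_strict[OF continuous, of s t c] assms c by auto
  obtain x\<^sub>2 where x\<^sub>2: "t < x\<^sub>2" "x\<^sub>2 < y" "k x\<^sub>2 = c"
    using IVT_strict[OF continuous, of t y c] assms c by auto
  obtain z where z: "z > p" "hit c z" "y < z \<or> k z \<noteq> c"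
    using third_hit[of t y c] assms c by auto
  show False
    using at_most_two_hits[OF _ _ z(1) _ _ _ _ _ z(2), of x\<^sub>1 x\<^sub>2] hit_self[of x\<^sub>1] hit_self[of x\<^sub>2]
      x\<^sub>1 x\<^sub>2 z(3) assms by force
qed

lemma no_plateau:
  assumes "p < u" "u < w" "w < v" "k u = k w" "k w = k v"
  shows False
  using at_most_two_hits[of u w v "k u"] hit_self[of u] hit_self[of w] hit_self[of v] assms by auto

lemma strict_mono_on_left_of_max:
  assumes max: "\<forall>x>p. k x \<le> k m"
  shows "strict_mono_on {p<..m} k"
proof -
  have weak: "k u \<le> k v" if "p < u" "u < v" "v \<le> m" for u v
    using no_valley[of u v m] max that by (cases "v = m") (auto simp: min_def)
  show ?thesis
  proof (rule strict_mono_onI)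
    fix u v assume "u \<in> {p<..m}" "v \<in> {p<..m}" "u < v"
    then have "k u \<le> k ((u + v)/2)" "k ((u + v)/2) \<le> k v"
      by (auto intro!: weak)
    with no_plateau[of u "(u + v)/2" v] \<open>u \<in> {p<..m}\<close> \<open>u < v\<close> show "k u < k v" by force
  qed
qed

lemma strict_antimono_on_right_of_max:
  assumes max: "\<forall>x>p. k x \<le> k m" and "p < m"
  shows "strict_antimono_on {m..} k"
proof -
  have weak: "k v \<le> k u" if "m \<le> u" "u < v" for u v
  proof -
    have "k v \<le> k m" using max that \<open>p < m\<close> by auto
    then show ?thesis
      using no_valley[of m u v] that \<open>p < m\<close> by (cases "u = m") (auto simp: min_def split: if_splits)
  qed
  show ?thesis
  proof (rule monotone_onI)
    fix u v assume "u \<in> {m..}" "v \<in> {m..}" "u < v"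
    then have "k ((u + v)/2) \<le> k u" "k v \<le> k ((u + v)/2)"
      by (auto intro!: weak)
    with no_plateau[of u "(u + v)/2" v] \<open>u \<in> {m..}\<close> \<open>u < v\<close> \<open>p < m\<close> show "k v < k u" by force
  qed
qed

lemma unique_local_extremum:
  assumes "p < m" "\<forall>x>p. k x \<le> k m"
  shows "\<exists>!x. local_extremum_on {p<..} k x"
  using unique_local_extremum_if_unimodal strict_mono_on_left_of_max strict_antimono_on_right_of_max assms
  by blast

end

lemma depressed_quartic_three_roots:
  fixes A C D F x\<^sub>1 x\<^sub>2 x\<^sub>3 :: real
  assumes "x\<^sub>1 \<noteq> x\<^sub>2" "x\<^sub>1 \<noteq> x\<^sub>3" "x\<^sub>2 \<noteq> x\<^sub>3"
    and "A*x\<^sub>1^4 + C*x\<^sub>1^2 + D*x\<^sub>1 + F = 0" "A*x\<^sub>2^4 + C*x\<^sub>2^2 + D*x\<^sub>2 + F = 0"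
      "A*x\<^sub>3^4 + C*x\<^sub>3^2 + D*x\<^sub>3 + F = 0"
  shows "A*(x\<^sub>1^2 + x\<^sub>2^2 + x\<^sub>3^2 + x\<^sub>1*x\<^sub>2 + x\<^sub>1*x\<^sub>3 + x\<^sub>2*x\<^sub>3) + C = 0"
proof -
  define d where "d = (\<lambda>x y. A*(x^3 + x^2*y + x*y^2 + y^3) + C*(x + y) + D)"
  have "(x - y) * d x y = (A*x^4 + C*x^2 + D*x + F) - (A*y^4 + C*y^2 + D*y + F)" for x y
    unfolding d_def by algebra
  then have "(x\<^sub>2 - x\<^sub>1) * d x\<^sub>2 x\<^sub>1 = 0" "(x\<^sub>3 - x\<^sub>1) * d x\<^sub>3 x\<^sub>1 = 0"
    using assms(4-6) by (metis diff_self)+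
  then have "d x\<^sub>2 x\<^sub>1 = 0" "d x\<^sub>3 x\<^sub>1 = 0" using assms(1,2) by simp_all
  moreover have "(x\<^sub>3 - x\<^sub>2) * (A*(x\<^sub>1^2 + x\<^sub>2^2 + x\<^sub>3^2 + x\<^sub>1*x\<^sub>2 + x\<^sub>1*x\<^sub>3 + x\<^sub>2*x\<^sub>3) + C)
      = d x\<^sub>3 x\<^sub>1 - d x\<^sub>2 x\<^sub>1"
    unfolding d_def by algebra
  ultimately show ?thesis using assms(3) by simp
qed

lemma depressed_quartic_four_roots:
  fixes A C D F x\<^sub>1 x\<^sub>2 x\<^sub>3 x\<^sub>4 :: real
  assumes "x\<^sub>1 \<noteq> x\<^sub>2" "x\<^sub>1 \<noteq> x\<^sub>3" "x\<^sub>2 \<noteq> x\<^sub>3" "x\<^sub>1 \<noteq> x\<^sub>4" "x\<^sub>2 \<noteq> x\<^sub>4" "x\<^sub>3 \<noteq> x\<^sub>4"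
    and "A*x\<^sub>1^4 + C*x\<^sub>1^2 + D*x\<^sub>1 + F = 0" "A*x\<^sub>2^4 + C*x\<^sub>2^2 + D*x\<^sub>2 + F = 0"
      "A*x\<^sub>3^4 + C*x\<^sub>3^2 + D*x\<^sub>3 + F = 0" "A*x\<^sub>4^4 + C*x\<^sub>4^2 + D*x\<^sub>4 + F = 0"
  shows "A*(x\<^sub>1 + x\<^sub>2 + x\<^sub>3 + x\<^sub>4) = 0"
proof -
  have "A*(x\<^sub>1^2 + x\<^sub>2^2 + x\<^sub>3^2 + x\<^sub>1*x\<^sub>2 + x\<^sub>1*x\<^sub>3 + x\<^sub>2*x\<^sub>3) + C = 0"
    "A*(x\<^sub>1^2 + x\<^sub>2^2 + x\<^sub>4^2 + x\<^sub>1*x\<^sub>2 + x\<^sub>1*x\<^sub>4 + x\<^sub>2*x\<^sub>4) + C = 0"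
    using depressed_quartic_three_roots[of x\<^sub>1 x\<^sub>2 _ A C D F] assms by simp_all
  moreover have "(x\<^sub>3 - x\<^sub>4) * (A*(x\<^sub>1 + x\<^sub>2 + x\<^sub>3 + x\<^sub>4))
      = (A*(x\<^sub>1^2 + x\<^sub>2^2 + x\<^sub>3^2 + x\<^sub>1*x\<^sub>2 + x\<^sub>1*x\<^sub>3 + x\<^sub>2*x\<^sub>3) + C)
        - (A*(x\<^sub>1^2 + x\<^sub>2^2 + x\<^sub>4^2 + x\<^sub>1*x\<^sub>2 + x\<^sub>1*x\<^sub>4 + x\<^sub>2*x\<^sub>4) + C)"
    by algebra
  ultimately show ?thesis using assms(6) by simp
qed

text \<open>\<open>radial_R M a Q E r\<close> is $R(r)/L_z^2$ with $\mathcal E = E$; its $r^3$ coefficient vanishes.\<close>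
definition radial_R :: "real \<Rightarrow> real \<Rightarrow> real \<Rightarrow> real \<Rightarrow> real \<Rightarrow> real" where
  "radial_R M a Q E r = E^2*r^4 + (a^2*E^2 - 1 - Q)*r^2 + 2*M*((a*E - 1)^2 + Q)*r + - (a^2*Q)"

definition V_radicand :: "real \<Rightarrow> real \<Rightarrow> real \<Rightarrow> real \<Rightarrow> real" where
  "V_radicand M a Q r = r * kerr_Delta M a r * ((1 + Q) * r^3 + a^2 * Q * (r + 2*M))"

definition V_denom :: "real \<Rightarrow> real \<Rightarrow> real \<Rightarrow> real" where
  "V_denom M a r = r * (r * (r^2 + a^2) + 2*M*a^2)"

definition turning_point :: "real \<Rightarrow> real \<Rightarrow> real \<Rightarrow> real \<Rightarrow> real \<Rightarrow> bool" where
  "turning_point M a Q E r \<longleftrightarrow> V_plus M a r Q = E \<or> V_minus M a r Q = E"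

definition Omega_H :: "real \<Rightarrow> real \<Rightarrow> real" where
  "Omega_H M a = a / (r_plus M a ^ 2 + a^2)"

lemma radial_R_Carter_form:
  "radial_R M a Q E r = ((r^2 + a^2)*E - a)^2 - kerr_Delta M a r * (Q + (a*E - 1)^2)"
  unfolding radial_R_def kerr_Delta_def by algebra

lemma V_plus_eq: "V_plus M a r Q = (2*M*a*r + sqrt (V_radicand M a Q r)) / V_denom M a r"
  unfolding V_plus_def V_radicand_def V_denom_def by simp

lemma V_minus_eq: "V_minus M a r Q = (2*M*a*r - sqrt (V_radicand M a Q r)) / V_denom M a r"
  unfolding V_minus_def V_radicand_def V_denom_def by simp

lemma radial_R_factor:
  assumes "V_radicand M a Q r \<ge> 0" "V_denom M a r > 0"
  shows "radial_R M a Q E r = V_denom M a r * (E - V_plus M a r Q) * (E - V_minus M a r Q)"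
proof -
  define P W where "P = V_denom M a r" and "W = V_radicand M a Q r"
  have "radial_R M a Q E r * P = (P*E - 2*M*a*r)^2 - W"
    unfolding radial_R_def P_def W_def V_denom_def V_radicand_def kerr_Delta_def by algebra
  also have "\<dots> = (P*E - 2*M*a*r)^2 - sqrt W ^ 2" using assms(1) W_def by simp
  also have "\<dots> = P * (E - (2*M*a*r + sqrt W)/P) * (E - (2*M*a*r - sqrt W)/P) * P"
    using assms(2) P_def by (simp add: field_simps power2_eq_square)
  finally show ?thesis
    unfolding V_plus_eq V_minus_eq P_def[symmetric] W_def[symmetric] using assms(2) P_def by simp
qed

lemma radial_R_deriv:
  "DERIV (radial_R M a Q E) r :> 4*E^2*r^3 + 2*(a^2*E^2 - 1 - Q)*r + 2*M*((a*E - 1)^2 + Q)"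
  unfolding radial_R_def
  by (auto intro!: derivative_eq_intros simp: algebra_simps power2_eq_square power3_eq_cube)

lemma tendsto_V_plus: "Q \<ge> 0 \<Longrightarrow> ((\<lambda>r. V_plus M a r Q) \<longlongrightarrow> 0) at_top"
  unfolding V_plus_def kerr_Delta_def by real_asymp

lemma tendsto_V_minus: "Q \<ge> 0 \<Longrightarrow> ((\<lambda>r. V_minus M a r Q) \<longlongrightarrow> 0) at_top"
  unfolding V_minus_def kerr_Delta_def by real_asymp

locale kerr_exterior =
  fixes M a Q :: real
  assumes M_pos: "M > 0" and a_nonneg: "0 \<le> a" and a_less_M: "a < M" and Q_nonneg: "Q \<ge> 0"
begin

lemma r_plus_bounds: "M < r_plus M a" "r_plus M a \<le> 2*M"
proof -
  have "a^2 < M^2" using a_nonneg a_less_M by (simp add: power_strict_mono)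
  moreover have "sqrt (M^2 - a^2) \<le> sqrt (M^2)" by (rule real_sqrt_le_mono) simp
  ultimately show "M < r_plus M a" "r_plus M a \<le> 2*M" unfolding r_plus_def using M_pos by auto
qed

lemma kerr_Delta_r_plus: "kerr_Delta M a (r_plus M a) = 0"
proof -
  have "a^2 \<le> M^2" using a_nonneg a_less_M by (simp add: power_mono)
  then show ?thesis unfolding kerr_Delta_def r_plus_def by (simp add: algebra_simps power2_eq_square)
qed

lemma kerr_Delta_pos:
  assumes "r > r_plus M a"
  shows "kerr_Delta M a r > 0"
proof -
  have "kerr_Delta M a r = (r - r_plus M a) * (r + r_plus M a - 2*M)"
    using kerr_Delta_r_plus unfolding kerr_Delta_def by (simp add: algebra_simps power2_eq_square)
  then show ?thesis using assms r_plus_bounds by simp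
qed

lemma exterior_pos:
  assumes "r > r_plus M a"
  shows "r > 0" "V_radicand M a Q r > 0" "V_denom M a r > 0"
proof -
  show r: "r > 0" using assms r_plus_bounds M_pos by linarith
  have "(1 + Q) * r^3 + a^2 * Q * (r + 2*M) > 0"
    using Q_nonneg r M_pos by (intro add_pos_nonneg) auto
  then show "V_radicand M a Q r > 0" unfolding V_radicand_def using r kerr_Delta_pos[OF assms] by simp
  show "V_denom M a r > 0" unfolding V_denom_def using r M_pos by (intro mult_pos_pos add_pos_nonneg) auto
qed

lemma V_minus_less_V_plus: "r > r_plus M a \<Longrightarrow> V_minus M a r Q < V_plus M a r Q"
  unfolding V_plus_eq V_minus_eq using exterior_pos[of r] by (simp add: divide_strict_right_mono)

lemma V_plus_pos: "r > r_plus M a \<Longrightarrow> V_plus M a r Q > 0"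
  unfolding V_plus_eq using exterior_pos[of r] M_pos a_nonneg by (auto intro!: divide_pos_pos add_nonneg_pos)

lemma radial_R_neg_imp_between:
  assumes "r > r_plus M a" "radial_R M a Q E r < 0"
  shows "V_minus M a r Q < E" "E < V_plus M a r Q"
proof -
  have "(E - V_plus M a r Q) * (E - V_minus M a r Q) < 0"
    using assms radial_R_factor[of M a Q r E] exterior_pos[OF assms(1)]
    by (simp add: mult.assoc zero_less_mult_iff mult_less_0_iff)
  then show "V_minus M a r Q < E" "E < V_plus M a r Q"
    using V_minus_less_V_plus[OF assms(1)] by (auto simp: mult_less_0_iff)
qed

lemma radial_R_at_most_two_exterior_roots:
  assumes "x > r_plus M a" "y > r_plus M a" "z > r_plus M a" "x \<noteq> y" "x \<noteq> z" "y \<noteq> z"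
    and "radial_R M a Q E x = 0" "radial_R M a Q E y = 0" "radial_R M a Q E z = 0"
  shows False
proof (cases "E = 0")
  case True
  have "E^2*(x^2 + y^2 + z^2 + x*y + x*z + y*z) + (a^2*E^2 - 1 - Q) = 0"
    using depressed_quartic_three_roots assms(4-) unfolding radial_R_def by blast
  then show False using True Q_nonneg by simp
next
  case False
  have "radial_R M a Q E (r_plus M a) \<ge> 0"
    unfolding radial_R_Carter_form kerr_Delta_r_plus by simp
  moreover have "radial_R M a Q E 0 \<le> 0" using Q_nonneg unfolding radial_R_def by simp
  moreover have "continuous_on {0..r_plus M a} (radial_R M a Q E)"
    unfolding radial_R_def by (intro continuous_intros)
  ultimately obtain w where w: "0 \<le> w" "w \<le> r_plus M a" "radial_R M a Q E w = 0"
    using IVT'[of "radial_R M a Q E" 0 0 "r_plus M a"] r_plus_bounds M_pos by auto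
  have "E^2*(w + x + y + z) = 0"
    by (rule depressed_quartic_four_roots[where C = "a^2*E^2 - 1 - Q" and D = "2*M*((a*E - 1)^2 + Q)"
          and F = "- (a^2*Q)"])
      (use w assms in \<open>auto simp: radial_R_def\<close>)
  moreover have "w + x + y + z > 0" using w assms r_plus_bounds M_pos by linarith
  ultimately show False using False by simp
qed

lemma at_most_two_turning_points:
  assumes "x > r_plus M a" "y > r_plus M a" "z > r_plus M a" "x \<noteq> y" "x \<noteq> z" "y \<noteq> z"
    and "turning_point M a Q E x" "turning_point M a Q E y" "turning_point M a Q E z"
  shows False
proof -
  have "radial_R M a Q E r = 0" if "r > r_plus M a" "turning_point M a Q E r" for r
    using that radial_R_factor[of M a Q r E] exterior_pos[of r] unfolding turning_point_def by auto
  then show False using radial_R_at_most_two_exterior_roots assms by blast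
qed

lemma continuous_V:
  "continuous_on {r_plus M a..} (\<lambda>r. V_plus M a r Q)"
  "continuous_on {r_plus M a..} (\<lambda>r. V_minus M a r Q)"
proof -
  have "V_denom M a r \<noteq> 0" if "r \<in> {r_plus M a..}" for r
    using that r_plus_bounds M_pos unfolding V_denom_def
    by (intro mult_pos_pos add_pos_nonneg order.strict_implies_not_eq[symmetric]) auto
  then show "continuous_on {r_plus M a..} (\<lambda>r. V_plus M a r Q)"
    "continuous_on {r_plus M a..} (\<lambda>r. V_minus M a r Q)"
    unfolding V_plus_eq V_minus_eq V_radicand_def V_denom_def kerr_Delta_def
    by (auto intro!: continuous_intros)
qed

lemma V_at_r_plus: "V_plus M a (r_plus M a) Q = Omega_H M a" "V_minus M a (r_plus M a) Q = Omega_H M a"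
proof -
  define p where "p = r_plus M a"
  have p: "p > 0" "p^2 + a^2 = 2*M*p"
    using r_plus_bounds M_pos kerr_Delta_r_plus unfolding p_def kerr_Delta_def by auto
  then have "V_denom M a p = p * (p * (2*M*p) + 2*M*a^2)" unfolding V_denom_def by simp
  also have "\<dots> = (2*M*p) * (p^2 + a^2)" by (simp add: algebra_simps power2_eq_square)
  finally have "V_denom M a p = (2*M*p) * (p^2 + a^2)" .
  moreover have "V_radicand M a Q p = 0" unfolding V_radicand_def p_def kerr_Delta_r_plus by simp
  ultimately show "V_plus M a (r_plus M a) Q = Omega_H M a" "V_minus M a (r_plus M a) Q = Omega_H M a"
    unfolding V_plus_eq V_minus_eq Omega_H_def p_def[symmetric] using p M_pos by simp_all
qed

lemma Omega_H_nonneg: "Omega_H M a \<ge> 0"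
  unfolding Omega_H_def using a_nonneg by simp

lemma exists_V_plus_above_Omega_H: "\<exists>x>r_plus M a. V_plus M a x Q > Omega_H M a"
proof -
  define p \<Omega> where "p = r_plus M a" and "\<Omega> = Omega_H M a"
  have p: "p^2 + a^2 > 0" "(p^2 + a^2) * \<Omega> = a"
    using r_plus_bounds M_pos unfolding p_def \<Omega>_def Omega_H_def by (auto simp: add_pos_nonneg)
  have "a * \<Omega> = a^2 / (p^2 + a^2)" unfolding \<Omega>_def Omega_H_def p_def by (simp add: power2_eq_square)
  then have "a * \<Omega> < 1" using p(1) r_plus_bounds M_pos p_def by (simp add: divide_less_eq)
  then have "Q + (a*\<Omega> - 1)^2 > 0" using Q_nonneg by (simp add: add_nonneg_pos)
  text \<open>The horizon is a simple root of $R$ at $\mathcal E = \Omega_H$, where $R$ then decreases.\<close>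
  moreover have "4*\<Omega>^2*p^3 + 2*(a^2*\<Omega>^2 - 1 - Q)*p + 2*M*((a*\<Omega> - 1)^2 + Q)
      = 4*p*\<Omega>*((p^2 + a^2)*\<Omega> - a) - (2*p - 2*M)*(Q + (a*\<Omega> - 1)^2)"
    by algebra
  ultimately have "4*\<Omega>^2*p^3 + 2*(a^2*\<Omega>^2 - 1 - Q)*p + 2*M*((a*\<Omega> - 1)^2 + Q) < 0"
    using p(2) r_plus_bounds p_def by simp
  then obtain d where d: "d > 0" "\<And>h. 0 < h \<Longrightarrow> h < d \<Longrightarrow> radial_R M a Q \<Omega> (p + h) < radial_R M a Q \<Omega> p"
    using DERIV_neg_dec_right[OF radial_R_deriv] by blast
  have "radial_R M a Q \<Omega> p = 0"
    unfolding radial_R_Carter_form p_def kerr_Delta_r_plus using p(2) p_def by simp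
  then have "radial_R M a Q \<Omega> (p + d/2) < 0" using d by simp
  then show ?thesis
    using radial_R_neg_imp_between[of "p + d/2" \<Omega>] d unfolding p_def \<Omega>_def
    by (intro exI[of _ "r_plus M a + d/2"]) auto
qed

lemma exists_V_minus_neg: "\<exists>x>r_plus M a. V_minus M a x Q < 0"
proof -
  define x where "x = 2*M + 1"
  have x: "x > r_plus M a" using r_plus_bounds x_def by auto
  have "radial_R M a Q 0 x = - ((1 + Q)*(x*(x - 2*M))) - a^2*Q"
    unfolding radial_R_def by (simp add: algebra_simps power2_eq_square)
  moreover have "(1 + Q)*(x*(x - 2*M)) > 0" using M_pos Q_nonneg x_def by simp
  moreover have "a^2*Q \<ge> 0" using Q_nonneg by simp
  ultimately have "radial_R M a Q 0 x < 0" by linarith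
  then show ?thesis using radial_R_neg_imp_between(1)[OF x] x by blast
qed

lemma level_bounded_V_plus:
  "level_bounded (r_plus M a) (\<lambda>r. V_plus M a r Q) (turning_point M a Q)"
proof
  fix c x y
  assume "r_plus M a < x" "x < y" "V_plus M a x Q < c" "c < V_plus M a y Q"
  then obtain z where "z > y" "V_plus M a z Q = c"
    using level_attained_beyond[OF continuous_V(1) tendsto_V_plus[OF Q_nonneg], of y c]
      V_plus_pos[of x] by force
  with \<open>r_plus M a < x\<close> \<open>x < y\<close>
  show "\<exists>z>r_plus M a. turning_point M a Q c z \<and> (y < z \<or> V_plus M a z Q \<noteq> c)"
    unfolding turning_point_def by (intro exI[of _ z]) auto
qed (use continuous_V at_most_two_turning_points in \<open>auto simp: turning_point_def\<close>)

lemma level_bounded_neg_V_minus: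
  "level_bounded (r_plus M a) (\<lambda>r. - V_minus M a r Q) (\<lambda>c. turning_point M a Q (- c))"
proof
  fix c x y
  assume xy: "r_plus M a < x" "x < y" "- V_minus M a x Q < c" "c < - V_minus M a y Q" "c \<noteq> 0"
  show "\<exists>z>r_plus M a. turning_point M a Q (- c) z \<and> (y < z \<or> - V_minus M a z Q \<noteq> c)"
  proof (cases "c > 0")
    case True
    then obtain z where "z > y" "- V_minus M a z Q = c"
      using level_attained_beyond[OF continuous_on_minus[OF continuous_V(2)]
          tendsto_minus[OF tendsto_V_minus[OF Q_nonneg], simplified], of y c] xy by force
    with xy show ?thesis unfolding turning_point_def by (intro exI[of _ z]) auto
  next
    case False
    text \<open>Levels $-c > 0$ below $V_-$ are met by $V_+$, which lies above $V_-$.\<close>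
    have "- c < V_plus M a x Q" using V_minus_less_V_plus[of x] xy by simp
    then obtain z where "z > x" "V_plus M a z Q = - c"
      using level_attained_beyond[OF continuous_V(1) tendsto_V_plus[OF Q_nonneg], of x "- c"]
        False xy by force
    with xy V_minus_less_V_plus[of z] show ?thesis
      unfolding turning_point_def by (intro exI[of _ z]) auto
  qed
qed (use continuous_V at_most_two_turning_points in \<open>auto intro: continuous_intros simp: turning_point_def\<close>)

lemma unique_local_extremum_V_plus:
  "\<exists>!r. local_extremum_on {r_plus M a<..} (\<lambda>r. V_plus M a r Q) r"
proof -
  obtain x where "x > r_plus M a" "V_plus M a x Q > V_plus M a (r_plus M a) Q"
    using exists_V_plus_above_Omega_H V_at_r_plus by auto
  then obtain m where "m > r_plus M a" "\<forall>x>r_plus M a. V_plus M a x Q \<le> V_plus M a m Q"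
    using continuous_on_halfline_attains_max[OF continuous_V(1) tendsto_V_plus[OF Q_nonneg]]
      V_plus_pos by blast
  then show ?thesis by (rule level_bounded.unique_local_extremum[OF level_bounded_V_plus])
qed

lemma unique_local_extremum_V_minus:
  "\<exists>!r. local_extremum_on {r_plus M a<..} (\<lambda>r. V_minus M a r Q) r"
proof -
  obtain x where "x > r_plus M a" "- V_minus M a x Q > - V_minus M a (r_plus M a) Q" "- V_minus M a x Q > 0"
    using exists_V_minus_neg V_at_r_plus Omega_H_nonneg by force
  then obtain m where "m > r_plus M a" "\<forall>x>r_plus M a. - V_minus M a x Q \<le> - V_minus M a m Q"
    using continuous_on_halfline_attains_max[OF continuous_on_minus[OF continuous_V(2)]
        tendsto_minus[OF tendsto_V_minus[OF Q_nonneg], simplified]] by blast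
  then have "\<exists>!r. local_extremum_on {r_plus M a<..} (\<lambda>r. - V_minus M a r Q) r"
    by (rule level_bounded.unique_local_extremum[OF level_bounded_neg_V_minus])
  then show ?thesis unfolding local_extremum_on_uminus .
qed

end

theorem lemma2:
  fixes M a Q :: real
  assumes "M > 0" and "0 \<le> a" and "a < M" and "Q \<ge> 0"
  shows "(\<exists>!r. local_extremum_on {r_plus M a<..} (\<lambda>r. V_plus M a r Q) r)
       \<and> (\<exists>!r. local_extremum_on {r_plus M a<..} (\<lambda>r. V_minus M a r Q) r)"
proof -
  interpret kerr_exterior M a Q using assms by unfold_locales
  show ?thesis using unique_local_extremum_V_plus unique_local_extremum_V_minus by blast
qed

end
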